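(* In a two-intervention factorial stepped-wedge trial (as defined in the context), assuming the matrix $\sum_i\mathbf X_i'\Sigma^{-1}\mathbf X_i-\mathbf S\bar{\mathbf X}$ is invertible, the $2\times 2(T-1)$ matrix $$\mathbf H=\Big[\sum_{i}\mathbf X_i'\Sigma^{-1}\mathbf X_i-\mathbf S\bar{\mathbf X}\Big]^{-1}\Big[\sum_{i}\mathbf X_i'\Sigma^{-1}\mathbf Z_i-\mathbf S\bar{\mathbf Z}\Big]$$ (for which $\mathrm E(\hat\theta)=\mathbf H\delta$ whenever $\mathrm E(\bar{\mathbf y}_i)=\beta+\mathbf Z_i\delta$) has the block form $$\mathbf H=\begin{pmatrix}\mathbf h_1'&\mathbf h_2'\\ \mathbf h_2'&\mathbf h_1'\end{pmatrix}$$ for some row vectors $\mathbf h_1',\mathbf h_2'$ of length $T-1$. Hence $\mathrm E(\hat\theta_1)=\mathbf h_1'\delta_1+\mathbf h_2'\delta_2$ and $\mathrm E(\hat\theta_2)=\mathbf h_2'\delta_1+\mathbf h_1'\delta_2$.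
   Context: A two-intervention ($m=2$) stepped-wedge trial with $T$ periods, $I$ clusters, common cluster-period size $n$. $x_{kij}\in\{0,1\}$ indicates intervention $k$ in cluster $i$ at period $j$, with $x_{ki1}=0$ and $x_{kij}$ nondecreasing in $j$; each cluster starts under control and may add one intervention and later the other. The design is factorial in the sense that the clusters are partitioned into pairs $(i,i')$ whose allocations are mirror images: $x_{1ij}=x_{2i'j}$ and $x_{2ij}=x_{1i'j}$ for all $j$. Exposure time $e_{kij}=\sum_{j'\le j}x_{kij'}$. $\mathbf X_i$ is $T\times2$ with $(j,k)$ entry $x_{kij}$; $\mathbf Z_{k,i}$ is $T\times(T-1)$ with $(j,e)$ entry $1$ iff $e_{kij}=e$; $\mathbf Z_i=(\mathbf Z_{1,i},\mathbf Z_{2,i})$; $\bar{\mathbf Z}=\frac1I\sum_i\mathbf Z_i$, $\bar{\mathbf X}=\frac1I\sum_i\mathbf X_i$, $\mathbf S=\sum_i\mathbf X_i'\Sigma^{-1}$, $\Sigma=\sigma_\alpha^2\mathbf 1\mathbf 1'+(\sigma_\epsilon^2/n)\mathbf I_T$ the covariance of the cluster-period mean vector $\bar{\mathbf y}_i$. $\delta=(\delta_1',\delta_2')'$, $\delta_k\in\mathbb R^{T-1}$ exposure-time-specific effects. $\hat\theta=(\hat\theta_1,\hat\theta_2)'$ is the GLS estimator (known $\Sigma$) of $\theta$ in the working constant-effect model $\bar{\mathbf y}_i=\beta+\mathbf X_i\theta+\mathbf 1\alpha_i+\bar\epsilon_i$ with unrestricted $\beta\in\mathbb R^T$. *)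

theory Defs
  imports "Jordan_Normal_Form.Matrix"
begin

(* Indexing is 0-based: periods j \<in> {0..<T}, clusters i \<in> {0..<I},
   interventions k \<in> {0,1} (paper's k = 1,2). x k i j is x_{(k+1)(i+1)(j+1)}. *)

definition minv :: "real mat \<Rightarrow> real mat" where
  "minv A = (SOME B. inverts_mat A B \<and> inverts_mat B A)"

definition msum :: "nat \<Rightarrow> nat \<Rightarrow> (nat \<Rightarrow> real mat) \<Rightarrow> nat \<Rightarrow> real mat" where
  "msum nr nc f I = mat nr nc (\<lambda>rc. \<Sum>i<I. f i $$ rc)"

definition expo :: "(nat \<Rightarrow> nat \<Rightarrow> nat \<Rightarrow> real) \<Rightarrow> nat \<Rightarrow> nat \<Rightarrow> nat \<Rightarrow> real" where
  "expo x k i j = (\<Sum>j'\<le>j. x k i j')"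

definition Xmat :: "(nat \<Rightarrow> nat \<Rightarrow> nat \<Rightarrow> real) \<Rightarrow> nat \<Rightarrow> nat \<Rightarrow> real mat" where
  "Xmat x T i = mat T 2 (\<lambda>(j,k). x k i j)"

definition Zkmat :: "(nat \<Rightarrow> nat \<Rightarrow> nat \<Rightarrow> real) \<Rightarrow> nat \<Rightarrow> nat \<Rightarrow> nat \<Rightarrow> real mat" where
  "Zkmat x T k i = mat T (T - 1) (\<lambda>(j,c). if expo x k i j = real (c + 1) then 1 else 0)"

definition Zmat :: "(nat \<Rightarrow> nat \<Rightarrow> nat \<Rightarrow> real) \<Rightarrow> nat \<Rightarrow> nat \<Rightarrow> real mat" where
  "Zmat x T i = mat T (2 * (T - 1)) (\<lambda>(j,c).
     if c < T - 1 then Zkmat x T 0 i $$ (j, c) else Zkmat x T 1 i $$ (j, c - (T - 1)))"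

(* covariance of the cluster-period mean vector *)
definition Sigma :: "nat \<Rightarrow> nat \<Rightarrow> real \<Rightarrow> real \<Rightarrow> real mat" where
  "Sigma T n sa2 se2 = mat T T (\<lambda>(j,j'). sa2 + (if j = j' then se2 / real n else 0))"

definition Xbar where
  "Xbar x T I = (1 / real I) \<cdot>\<^sub>m msum T 2 (Xmat x T) I"

definition Zbar where
  "Zbar x T I = (1 / real I) \<cdot>\<^sub>m msum T (2 * (T - 1)) (Zmat x T) I"

definition Smat where
  "Smat x T I n sa2 se2 =
     msum 2 T (\<lambda>i. transpose_mat (Xmat x T i) * minv (Sigma T n sa2 se2)) I"

definition Mmat where
  "Mmat x T I n sa2 se2 =
     msum 2 2 (\<lambda>i. transpose_mat (Xmat x T i) * minv (Sigma T n sa2 se2) * Xmat x T i) I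
     - Smat x T I n sa2 se2 * Xbar x T I"

definition Rmat where
  "Rmat x T I n sa2 se2 =
     msum 2 (2 * (T - 1)) (\<lambda>i. transpose_mat (Xmat x T i) * minv (Sigma T n sa2 se2) * Zmat x T i) I
     - Smat x T I n sa2 se2 * Zbar x T I"

definition Hmat where
  "Hmat x T I n sa2 se2 = minv (Mmat x T I n sa2 se2) * Rmat x T I n sa2 se2"

end

(* Let p pair each cluster with its mirror image, let P swap the two interventions and let Q
   swap the exposure blocks of intervention 1 and 2.  Mirroring means X_(p i) = X_i P and
   Z_(p i) = Z_i Q.  Every cluster sum is unchanged when reindexed by the bijection p, so
   M = sum X_i' Sigma^-1 X_i - S Xbar satisfies M = P M P and R = sum X_i' Sigma^-1 Z_i - S Zbar
   satisfies R = P R Q; as P is an involution, also M^-1 = P M^-1 P and thus H = M^-1 R = P H Q.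
   Read entrywise, the second row of H is its first row with the two blocks swapped. *)

theory Submission
  imports Defs
begin

(* Keeps swap_halves_mat 1 from being rewritten to swap_halves_mat (Suc 0). *)
declare One_nat_def [simp del]

definition half_swap :: "nat \<Rightarrow> nat \<Rightarrow> nat" where
  "half_swap m c = (if c < m then c + m else c - m)"

definition swap_halves_mat :: "nat \<Rightarrow> 'a :: semiring_1 mat" where
  "swap_halves_mat m = mat (2 * m) (2 * m) (\<lambda>(r, c). if r = half_swap m c then 1 else 0)"

lemma half_swap_less: "c < 2 * m \<Longrightarrow> half_swap m c < 2 * m"
  by (auto simp: half_swap_def)

lemma half_swap_half_swap: "c < 2 * m \<Longrightarrow> half_swap m (half_swap m c) = c"
  by (auto simp: half_swap_def)

lemma half_swap_eq_iff: "r < 2 * m \<Longrightarrow> c < 2 * m \<Longrightarrow> r = half_swap m c \<longleftrightarrow> c = half_swap m r"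
  by (auto simp: half_swap_def)

lemma swap_halves_mat_carrier [simp]: "swap_halves_mat m \<in> carrier_mat (2 * m) (2 * m)"
  by (simp add: swap_halves_mat_def)

lemma swap_halves_mat_1_carrier [simp]: "swap_halves_mat 1 \<in> carrier_mat 2 2"
  using swap_halves_mat_carrier[of 1] by simp

lemma mult_swap_halves_mat:
  assumes "A \<in> carrier_mat nr (2 * m)"
  shows "A * swap_halves_mat m = mat nr (2 * m) (\<lambda>(i, c). A $$ (i, half_swap m c))"
proof (rule eq_matI)
  fix i c assume "i < dim_row (mat nr (2 * m) (\<lambda>(i, c). A $$ (i, half_swap m c)))"
    "c < dim_col (mat nr (2 * m) (\<lambda>(i, c). A $$ (i, half_swap m c)))"
  then have ic: "i < nr" "c < 2 * m" by auto
  have "(A * swap_halves_mat m) $$ (i, c)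
      = (\<Sum>k<2 * m. A $$ (i, k) * (if k = half_swap m c then 1 else 0))"
    using assms ic by (simp add: swap_halves_mat_def scalar_prod_def lessThan_atLeast0)
  also have "\<dots> = A $$ (i, half_swap m c)"
    using half_swap_less[OF ic(2)] by (simp add: if_distrib sum.delta cong: if_cong)
  finally show "(A * swap_halves_mat m) $$ (i, c)
      = mat nr (2 * m) (\<lambda>(i, c). A $$ (i, half_swap m c)) $$ (i, c)"
    using ic by simp
qed (use assms in \<open>auto simp: swap_halves_mat_def\<close>)

lemma swap_halves_mat_mult:
  assumes "A \<in> carrier_mat (2 * m) nc"
  shows "swap_halves_mat m * A = mat (2 * m) nc (\<lambda>(r, c). A $$ (half_swap m r, c))"
proof (rule eq_matI)
  fix r c assume "r < dim_row (mat (2 * m) nc (\<lambda>(r, c). A $$ (half_swap m r, c)))"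
    "c < dim_col (mat (2 * m) nc (\<lambda>(r, c). A $$ (half_swap m r, c)))"
  then have rc: "r < 2 * m" "c < nc" by auto
  have "(swap_halves_mat m * A) $$ (r, c)
      = (\<Sum>k<2 * m. (if k = half_swap m r then 1 else 0) * A $$ (k, c))"
    using assms rc half_swap_eq_iff[OF rc(1)]
    by (auto simp: swap_halves_mat_def scalar_prod_def lessThan_atLeast0 intro!: sum.cong)
  also have "\<dots> = A $$ (half_swap m r, c)"
    using half_swap_less[OF rc(1)] by (simp add: if_distrib if_distribR sum.delta cong: if_cong)
  finally show "(swap_halves_mat m * A) $$ (r, c)
      = mat (2 * m) nc (\<lambda>(r, c). A $$ (half_swap m r, c)) $$ (r, c)"
    using rc by simp
qed (use assms in \<open>auto simp: swap_halves_mat_def\<close>)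

lemma transpose_swap_halves_mat [simp]: "transpose_mat (swap_halves_mat m) = swap_halves_mat m"
  by (rule eq_matI) (auto simp: swap_halves_mat_def half_swap_eq_iff)

lemma swap_halves_mat_squared: "swap_halves_mat m * swap_halves_mat m = 1\<^sub>m (2 * m)"
  unfolding mult_swap_halves_mat[OF swap_halves_mat_carrier]
  by (rule eq_matI) (auto simp: swap_halves_mat_def half_swap_half_swap half_swap_less)

definition mirror_block_mat :: "nat \<Rightarrow> 'a vec \<Rightarrow> 'a vec \<Rightarrow> 'a mat" where
  "mirror_block_mat m h1 h2 = mat 2 (2 * m) (\<lambda>(r, c).
     if r = 0 then (if c < m then h1 $ c else h2 $ (c - m))
     else (if c < m then h2 $ c else h1 $ (c - m)))"

lemma mirror_block_mat_mult_append:
  assumes "h1 \<in> carrier_vec m" "h2 \<in> carrier_vec m" "d1 \<in> carrier_vec m" "d2 \<in> carrier_vec m"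
  shows "mirror_block_mat m h1 h2 *\<^sub>v (d1 @\<^sub>v d2) =
    vec 2 (\<lambda>r. if r = 0 then h1 \<bullet> d1 + h2 \<bullet> d2 else h2 \<bullet> d1 + h1 \<bullet> d2)"
proof -
  have rows: "row (mirror_block_mat m h1 h2) 0 = h1 @\<^sub>v h2"
    "row (mirror_block_mat m h1 h2) 1 = h2 @\<^sub>v h1"
    using assms(1,2) by (auto simp: mirror_block_mat_def intro!: eq_vecI)
  show ?thesis
    using rows scalar_prod_append[OF assms(1,2,3,4)] scalar_prod_append[OF assms(2,1,3,4)]
    by (intro eq_vecI) (auto simp: mirror_block_mat_def less_2_cases_iff)
qed

lemma swap_invariant_mirror_block_mat:
  assumes H: "H \<in> carrier_mat 2 (2 * m)"
    and inv: "swap_halves_mat 1 * H * swap_halves_mat m = H"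
  shows "H = mirror_block_mat m (vec m (\<lambda>c. H $$ (0, c))) (vec m (\<lambda>c. H $$ (0, c + m)))"
proof -
  have H': "H \<in> carrier_mat (2 * 1) (2 * m)" using H by simp
  have swapped: "H $$ (r, c) = H $$ (half_swap 1 r, half_swap m c)" if "r < 2" "c < 2 * m" for r c
  proof -
    have PH: "swap_halves_mat 1 * H \<in> carrier_mat 2 (2 * m)"
      using mult_carrier_mat[OF swap_halves_mat_carrier H'] by simp
    have "H $$ (r, c) = (swap_halves_mat 1 * H * swap_halves_mat m) $$ (r, c)"
      by (simp only: inv)
    also have "\<dots> = (swap_halves_mat 1 * H) $$ (r, half_swap m c)"
      unfolding mult_swap_halves_mat[OF PH] using that by simp
    also have "\<dots> = H $$ (half_swap 1 r, half_swap m c)"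
      unfolding swap_halves_mat_mult[OF H'] using that half_swap_less[of c m] by simp
    finally show ?thesis .
  qed
  show ?thesis
  proof (rule eq_matI)
    fix r c assume "r < dim_row (mirror_block_mat m (vec m (\<lambda>c. H $$ (0, c))) (vec m (\<lambda>c. H $$ (0, c + m))))"
      "c < dim_col (mirror_block_mat m (vec m (\<lambda>c. H $$ (0, c))) (vec m (\<lambda>c. H $$ (0, c + m))))"
    then have rc: "r < 2" "c < 2 * m" by (auto simp: mirror_block_mat_def)
    then show "H $$ (r, c) = mirror_block_mat m (vec m (\<lambda>c. H $$ (0, c))) (vec m (\<lambda>c. H $$ (0, c + m))) $$ (r, c)"
      using swapped[OF rc] by (auto simp: mirror_block_mat_def half_swap_def less_2_cases_iff)
  qed (use H in \<open>auto simp: mirror_block_mat_def\<close>)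
qed

lemma mult_conj_mat:
  fixes A :: "'a :: semiring_1 mat"
  assumes A: "A \<in> carrier_mat a b" and B: "B \<in> carrier_mat b c"
    and P: "P \<in> carrier_mat a' a" and Q: "Q \<in> carrier_mat b b" and R: "R \<in> carrier_mat c c'"
    and QQ: "Q * Q = 1\<^sub>m b"
  shows "(P * A * Q) * (Q * B * R) = P * (A * B) * R"
proof -
  have BR: "B * R \<in> carrier_mat b c'" using B R by simp
  have PA: "P * A \<in> carrier_mat a' b" using P A by simp
  have "Q * (Q * B * R) = Q * (Q * (B * R))" using Q B R by simp
  also have "\<dots> = (Q * Q) * (B * R)" by (rule assoc_mult_mat[symmetric, OF Q Q BR])
  finally have QBR: "Q * (Q * B * R) = B * R" using QQ left_mult_one_mat[OF BR] by simp
  have "(P * A * Q) * (Q * B * R) = P * A * (Q * (Q * B * R))"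
    using PA Q B R by (intro assoc_mult_mat) auto
  also have "\<dots> = P * (A * (B * R))" unfolding QBR by (rule assoc_mult_mat[OF P A BR])
  also have "\<dots> = P * (A * B) * R"
    using assoc_mult_mat[OF P mult_carrier_mat[OF A B] R] assoc_mult_mat[OF A B R] by simp
  finally show ?thesis .
qed

lemma minus_conj_mat:
  fixes A :: "'a :: ring mat"
  assumes P: "P \<in> carrier_mat a' a" and A: "A \<in> carrier_mat a b" and B: "B \<in> carrier_mat a b"
    and Q: "Q \<in> carrier_mat b b'"
  shows "P * A * Q - P * B * Q = P * (A - B) * Q"
proof -
  have "P * A * Q - P * B * Q = (P * A - P * B) * Q"
    using P A B Q by (intro minus_mult_distrib_mat[symmetric]) auto
  also have "P * A - P * B = P * (A - B)" by (rule mult_minus_distrib_mat[symmetric, OF P A B])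
  finally show ?thesis .
qed

lemma smult_conj_mat:
  fixes A :: "'a :: comm_semiring_0 mat"
  assumes P: "P \<in> carrier_mat a' a" and A: "A \<in> carrier_mat a b" and Q: "Q \<in> carrier_mat b b'"
  shows "k \<cdot>\<^sub>m (P * A * Q) = P * (k \<cdot>\<^sub>m A) * Q"
proof -
  have "k \<cdot>\<^sub>m (P * A * Q) = (k \<cdot>\<^sub>m (P * A)) * Q"
    using P A Q by (intro mult_smult_assoc_mat[symmetric]) auto
  also have "k \<cdot>\<^sub>m (P * A) = P * (k \<cdot>\<^sub>m A)" by (rule mult_smult_distrib[symmetric, OF P A])
  finally show ?thesis .
qed

lemma msum_carrier [simp]: "msum nr nc f I \<in> carrier_mat nr nc"
  by (simp add: msum_def)

lemma dim_Xmat [simp]: "dim_row (Xmat x T i) = T" "dim_col (Xmat x T i) = 2"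
  by (simp_all add: Xmat_def)

lemma dim_Zmat [simp]: "dim_row (Zmat x T i) = T" "dim_col (Zmat x T i) = 2 * (T - 1)"
  by (simp_all add: Zmat_def)

lemma Xmat_carrier [simp]: "Xmat x T i \<in> carrier_mat T 2"
  by (simp add: carrier_matI)

lemma Zmat_carrier [simp]: "Zmat x T i \<in> carrier_mat T (2 * (T - 1))"
  by (simp add: carrier_matI)

lemma Xbar_carrier [simp]: "Xbar x T I \<in> carrier_mat T 2"
  by (simp add: Xbar_def)

lemma Zbar_carrier [simp]: "Zbar x T I \<in> carrier_mat T (2 * (T - 1))"
  by (simp add: Zbar_def)

lemma Smat_carrier [simp]: "Smat x T I n sa2 se2 \<in> carrier_mat 2 T"
  by (simp add: Smat_def)

lemma Mmat_carrier [simp]: "Mmat x T I n sa2 se2 \<in> carrier_mat 2 2"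
  unfolding Mmat_def by (rule minus_carrier_mat[OF mult_carrier_mat[OF Smat_carrier Xbar_carrier]])

lemma Rmat_carrier [simp]: "Rmat x T I n sa2 se2 \<in> carrier_mat 2 (2 * (T - 1))"
  unfolding Rmat_def by (rule minus_carrier_mat[OF mult_carrier_mat[OF Smat_carrier Zbar_carrier]])

lemma msum_cong: "(\<And>i. i < I \<Longrightarrow> f i = g i) \<Longrightarrow> msum nr nc f I = msum nr nc g I"
  unfolding msum_def by (intro eq_matI) auto

lemma msum_reindex_bij:
  assumes "bij_betw p {..<I} {..<I}"
  shows "msum nr nc (\<lambda>i. f (p i)) I = msum nr nc f I"
  unfolding msum_def by (intro eq_matI) (auto simp: sum.reindex_bij_betw[OF assms, of "\<lambda>i. f i $$ _"])

lemma msum_mult_right: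
  assumes "\<forall>i<I. f i \<in> carrier_mat nr k" "B \<in> carrier_mat k nc"
  shows "msum nr nc (\<lambda>i. f i * B) I = msum nr k f I * B"
proof (rule eq_matI)
  fix r c assume "r < dim_row (msum nr k f I * B)" "c < dim_col (msum nr k f I * B)"
  then have rc: "r < nr" "c < nc" using assms by (auto simp: msum_def)
  have "(\<Sum>i<I. (f i * B) $$ (r, c)) = (\<Sum>i<I. \<Sum>l<k. f i $$ (r, l) * B $$ (l, c))"
    using assms rc by (intro sum.cong) (auto simp: scalar_prod_def lessThan_atLeast0)
  also have "\<dots> = (\<Sum>l<k. (\<Sum>i<I. f i $$ (r, l)) * B $$ (l, c))"
    by (subst sum.swap) (simp add: sum_distrib_right)
  finally show "msum nr nc (\<lambda>i. f i * B) I $$ (r, c) = (msum nr k f I * B) $$ (r, c)"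
    using assms rc by (simp add: msum_def scalar_prod_def lessThan_atLeast0)
qed (use assms in \<open>auto simp: msum_def\<close>)

lemma msum_mult_left:
  assumes "\<forall>i<I. f i \<in> carrier_mat k nc" "B \<in> carrier_mat nr k"
  shows "msum nr nc (\<lambda>i. B * f i) I = B * msum k nc f I"
proof (rule eq_matI)
  fix r c assume "r < dim_row (B * msum k nc f I)" "c < dim_col (B * msum k nc f I)"
  then have rc: "r < nr" "c < nc" using assms by (auto simp: msum_def)
  have "(\<Sum>i<I. (B * f i) $$ (r, c)) = (\<Sum>i<I. \<Sum>l<k. B $$ (r, l) * f i $$ (l, c))"
    using assms rc by (intro sum.cong) (auto simp: scalar_prod_def lessThan_atLeast0)
  also have "\<dots> = (\<Sum>l<k. B $$ (r, l) * (\<Sum>i<I. f i $$ (l, c)))"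
    by (subst sum.swap) (simp add: sum_distrib_left)
  finally show "msum nr nc (\<lambda>i. B * f i) I $$ (r, c) = (B * msum k nc f I) $$ (r, c)"
    using assms rc by (simp add: msum_def scalar_prod_def lessThan_atLeast0)
qed (use assms in \<open>auto simp: msum_def\<close>)

lemma msum_conj_mat:
  assumes "\<And>i. i < I \<Longrightarrow> f i \<in> carrier_mat k l" "P \<in> carrier_mat nr k" "Q \<in> carrier_mat l nc"
  shows "msum nr nc (\<lambda>i. P * f i * Q) I = P * msum k l f I * Q"
proof -
  have "msum nr nc (\<lambda>i. P * f i * Q) I = msum nr l (\<lambda>i. P * f i) I * Q"
    using assms by (intro msum_mult_right) auto
  also have "msum nr l (\<lambda>i. P * f i) I = P * msum k l f I"
    using assms by (intro msum_mult_left) auto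
  finally show ?thesis .
qed

lemma minv_mat:
  assumes "invertible_mat A" "A \<in> carrier_mat k k"
  shows "minv A \<in> carrier_mat k k" "A * minv A = 1\<^sub>m k" "minv A * A = 1\<^sub>m k"
proof -
  have "\<exists>B. inverts_mat A B \<and> inverts_mat B A" using assms by (auto simp: invertible_mat_def)
  then have "inverts_mat A (minv A) \<and> inverts_mat (minv A) A"
    unfolding minv_def by (rule someI_ex)
  then have e: "A * minv A = 1\<^sub>m k" "minv A * A = 1\<^sub>m (dim_row (minv A))"
    using assms by (auto simp: inverts_mat_def)
  then show c: "minv A \<in> carrier_mat k k"
    using assms by (metis carrier_matD carrier_matI index_mult_mat(2,3) index_one_mat(2,3))
  show "A * minv A = 1\<^sub>m k" by (rule e)
  show "minv A * A = 1\<^sub>m k" using e c by auto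
qed

lemma Hmat_carrier:
  assumes "invertible_mat (Mmat x T I n sa2 se2)"
  shows "Hmat x T I n sa2 se2 \<in> carrier_mat 2 (2 * (T - 1))"
  unfolding Hmat_def by (rule mult_carrier_mat[OF minv_mat(1)[OF assms Mmat_carrier] Rmat_carrier])

lemma minv_eqI:
  assumes A: "A \<in> carrier_mat k k" and B: "B \<in> carrier_mat k k"
    and AB: "A * B = 1\<^sub>m k" and BA: "B * A = 1\<^sub>m k"
  shows "minv A = B"
proof -
  have "invertible_mat A"
    using A B AB BA unfolding invertible_mat_def inverts_mat_def square_mat.simps
    by (metis carrier_matD(1,2))
  note minv = minv_mat[OF this A]
  have "minv A = minv A * (A * B)" using minv(1) AB by simp
  also have "\<dots> = (minv A * A) * B" using minv(1) A B by simp
  finally show ?thesis using minv(3) B by simp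
qed

lemma minv_conj_mat:
  assumes A: "A \<in> carrier_mat k k" "invertible_mat A"
    and P: "P \<in> carrier_mat k k" and PP: "P * P = 1\<^sub>m k"
  shows "minv (P * A * P) = P * minv A * P"
proof -
  note minv = minv_mat[OF A(2,1)]
  show ?thesis
  proof (rule minv_eqI)
    show "(P * A * P) * (P * minv A * P) = 1\<^sub>m k"
      using mult_conj_mat[OF A(1) minv(1) P P P PP] minv(2) P PP by simp
    show "(P * minv A * P) * (P * A * P) = 1\<^sub>m k"
      using mult_conj_mat[OF minv(1) A(1) P P P PP] minv(3) P PP by simp
  qed (use A P minv in auto)
qed

lemma compound_symmetry_inverse_entry:
  fixes a c :: real
  assumes c: "c \<noteq> 0" and cTa: "c + real T * a \<noteq> 0" and "j < T" "j' < T"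
  shows "(\<Sum>k<T. (a + (if j = k then c else 0)) *
            ((if k = j' then 1 / c else 0) - a / (c * (c + real T * a))))
       = (if j = j' then 1 else 0)"
proof -
  define d where "d = a / (c * (c + real T * a))"
  have "(c + real T * a) * d = a / c"
    using cTa unfolding d_def divide_divide_eq_left[symmetric] by simp
  then have d: "c * d + real T * a * d = a / c" by (simp add: distrib_right)
  have split: "(a + (if j = k then c else 0)) * ((if k = j' then 1 / c else 0) - d)
      = ((if k = j' then a / c else 0) - a * d)
        + (if k = j then c * ((if j = j' then 1 / c else 0) - d) else 0)" for k
    by (auto simp: algebra_simps)
  have "(\<Sum>k<T. (a + (if j = k then c else 0)) * ((if k = j' then 1 / c else 0) - d))
      = (a / c - real T * (a * d)) + c * ((if j = j' then 1 / c else 0) - d)"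
    unfolding split sum.distrib using assms by (simp add: sum_subtractf sum.delta')
  also have "\<dots> = (if j = j' then 1 else 0)" using c d by (auto simp: algebra_simps)
  finally show ?thesis unfolding d_def .
qed

lemma minv_compound_symmetry:
  fixes a c :: real
  assumes c: "c \<noteq> 0" and cTa: "c + real T * a \<noteq> 0"
  shows "minv (mat T T (\<lambda>(j, j'). a + (if j = j' then c else 0)))
       = mat T T (\<lambda>(j, j'). (if j = j' then 1 / c else 0) - a / (c * (c + real T * a)))"
proof (rule minv_eqI)
  note entry = compound_symmetry_inverse_entry[OF c cTa]
  show "mat T T (\<lambda>(j, j'). a + (if j = j' then c else 0))
      * mat T T (\<lambda>(j, j'). (if j = j' then 1 / c else 0) - a / (c * (c + real T * a))) = 1\<^sub>m T"
    by (rule eq_matI) (auto simp: scalar_prod_def atLeast0LessThan entry)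
  have entry': "(\<Sum>k<T. ((if j = k then 1 / c else 0) - a / (c * (c + real T * a)))
      * (a + (if k = j' then c else 0))) = (if j = j' then 1 else 0)" if "j < T" "j' < T" for j j'
    using entry[OF that(2,1)] by (simp add: mult.commute eq_commute cong: if_cong)
  show "mat T T (\<lambda>(j, j'). (if j = j' then 1 / c else 0) - a / (c * (c + real T * a)))
      * mat T T (\<lambda>(j, j'). a + (if j = j' then c else 0)) = 1\<^sub>m T"
    by (rule eq_matI) (auto simp: scalar_prod_def atLeast0LessThan entry')
qed auto

lemma minv_Sigma_carrier:
  assumes "n > 0" "sa2 \<ge> 0" "se2 > 0"
  shows "minv (Sigma T n sa2 se2) \<in> carrier_mat T T"
proof -
  have "se2 / real n > 0" "se2 / real n + real T * sa2 > 0"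
    using assms by (auto intro: add_pos_nonneg)
  then show ?thesis
    unfolding Sigma_def by (subst minv_compound_symmetry) (use assms in auto)
qed

locale mirror_pairing =
  fixes x :: "nat \<Rightarrow> nat \<Rightarrow> nat \<Rightarrow> real" and T I :: nat and p :: "nat \<Rightarrow> nat"
  assumes pairing: "\<And>i. i < I \<Longrightarrow> p i < I \<and> p (p i) = i \<and>
    (\<forall>j<T. x 0 i j = x 1 (p i) j \<and> x 1 i j = x 0 (p i) j)"
begin

lemma bij_betw_partner: "bij_betw p {..<I} {..<I}"
  by (rule bij_betw_byWitness[where f' = p]) (use pairing in auto)

lemma Xmat_partner:
  assumes "i < I"
  shows "Xmat x T (p i) = 1\<^sub>m T * Xmat x T i * swap_halves_mat 1"
proof -
  have X: "Xmat x T i \<in> carrier_mat T (2 * 1)" by simp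
  show ?thesis
    unfolding left_mult_one_mat[OF X] mult_swap_halves_mat[OF X]
    using pairing[OF assms] by (intro eq_matI) (auto simp: Xmat_def half_swap_def less_2_cases_iff One_nat_def)
qed

lemma transpose_Xmat_partner:
  assumes "i < I"
  shows "transpose_mat (Xmat x T (p i)) = swap_halves_mat 1 * transpose_mat (Xmat x T i) * 1\<^sub>m T"
proof -
  have X: "Xmat x T i \<in> carrier_mat T 2" by simp
  have PXt: "swap_halves_mat 1 * transpose_mat (Xmat x T i) \<in> carrier_mat 2 T"
    by (rule mult_carrier_mat[OF swap_halves_mat_1_carrier]) simp
  show ?thesis
    unfolding Xmat_partner[OF assms] left_mult_one_mat[OF X] right_mult_one_mat[OF PXt]
    using transpose_mult[OF X swap_halves_mat_1_carrier] by simp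
qed

lemma expo_partner:
  assumes "i < I" "j < T"
  shows "expo x 0 (p i) j = expo x 1 i j" "expo x 1 (p i) j = expo x 0 i j"
  using pairing[OF assms(1)] assms(2) unfolding expo_def by (auto intro!: sum.cong)

lemma Zmat_partner:
  assumes "i < I"
  shows "Zmat x T (p i) = 1\<^sub>m T * Zmat x T i * swap_halves_mat (T - 1)"
proof -
  have Z: "Zmat x T i \<in> carrier_mat T (2 * (T - 1))" by simp
  show ?thesis
    unfolding left_mult_one_mat[OF Z] mult_swap_halves_mat[OF Z]
    using expo_partner[OF assms] by (intro eq_matI) (auto simp: Zmat_def Zkmat_def half_swap_def)
qed

lemma msum_partner_invariant:
  assumes "\<And>i. i < I \<Longrightarrow> f i \<in> carrier_mat k l" "P \<in> carrier_mat k k" "Q \<in> carrier_mat l l"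
    and "\<And>i. i < I \<Longrightarrow> f (p i) = P * f i * Q"
  shows "P * msum k l f I * Q = msum k l f I"
proof -
  have "P * msum k l f I * Q = msum k l (\<lambda>i. P * f i * Q) I"
    using assms by (intro msum_conj_mat[symmetric]) auto
  also have "\<dots> = msum k l (\<lambda>i. f (p i)) I" using assms(4) by (intro msum_cong) auto
  also have "\<dots> = msum k l f I" by (rule msum_reindex_bij[OF bij_betw_partner])
  finally show ?thesis .
qed

lemma Xbar_swap_invariant: "1\<^sub>m T * Xbar x T I * swap_halves_mat 1 = Xbar x T I"
proof -
  have "1\<^sub>m T * Xbar x T I * swap_halves_mat 1
      = (1 / real I) \<cdot>\<^sub>m (1\<^sub>m T * msum T 2 (Xmat x T) I * swap_halves_mat 1)"
    unfolding Xbar_def by (rule smult_conj_mat[symmetric, OF one_carrier_mat msum_carrier swap_halves_mat_1_carrier])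
  also have "1\<^sub>m T * msum T 2 (Xmat x T) I * swap_halves_mat 1 = msum T 2 (Xmat x T) I"
    by (rule msum_partner_invariant) (auto simp: Xmat_partner)
  finally show ?thesis unfolding Xbar_def .
qed

lemma Zbar_swap_invariant: "1\<^sub>m T * Zbar x T I * swap_halves_mat (T - 1) = Zbar x T I"
proof -
  have "1\<^sub>m T * Zbar x T I * swap_halves_mat (T - 1)
      = (1 / real I) \<cdot>\<^sub>m (1\<^sub>m T * msum T (2 * (T - 1)) (Zmat x T) I * swap_halves_mat (T - 1))"
    unfolding Zbar_def by (rule smult_conj_mat[symmetric, OF one_carrier_mat msum_carrier swap_halves_mat_carrier])
  also have "1\<^sub>m T * msum T (2 * (T - 1)) (Zmat x T) I * swap_halves_mat (T - 1)
      = msum T (2 * (T - 1)) (Zmat x T) I"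
    by (rule msum_partner_invariant) (auto simp: Zmat_partner)
  finally show ?thesis unfolding Zbar_def .
qed

context
  fixes W :: "real mat"
  assumes W: "W \<in> carrier_mat T T"
begin

lemma XtW_carrier: "transpose_mat (Xmat x T i) * W \<in> carrier_mat 2 T"
  by (rule mult_carrier_mat[OF _ W]) simp

lemma XtWX_carrier: "transpose_mat (Xmat x T i) * W * Xmat x T i \<in> carrier_mat 2 2"
  by (rule mult_carrier_mat[OF XtW_carrier Xmat_carrier])

lemma XtWZ_carrier: "transpose_mat (Xmat x T i) * W * Zmat x T i \<in> carrier_mat 2 (2 * (T - 1))"
  by (rule mult_carrier_mat[OF XtW_carrier Zmat_carrier])

lemma XtW_partner:
  assumes "i < I"
  shows "transpose_mat (Xmat x T (p i)) * W = swap_halves_mat 1 * (transpose_mat (Xmat x T i) * W) * 1\<^sub>m T"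
proof -
  have Xt: "transpose_mat (Xmat x T i) \<in> carrier_mat 2 T" by simp
  have "1\<^sub>m T * W * 1\<^sub>m T = W" using W by simp
  then show ?thesis
    unfolding transpose_Xmat_partner[OF assms]
    using mult_conj_mat[OF Xt W swap_halves_mat_1_carrier one_carrier_mat one_carrier_mat] by simp
qed

lemma XtWX_partner:
  assumes "i < I"
  shows "transpose_mat (Xmat x T (p i)) * W * Xmat x T (p i)
    = swap_halves_mat 1 * (transpose_mat (Xmat x T i) * W * Xmat x T i) * swap_halves_mat 1"
  unfolding XtW_partner[OF assms] unfolding Xmat_partner[OF assms]
  by (rule mult_conj_mat[OF XtW_carrier Xmat_carrier swap_halves_mat_1_carrier one_carrier_mat
        swap_halves_mat_1_carrier]) simp

lemma XtWZ_partner: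
  assumes "i < I"
  shows "transpose_mat (Xmat x T (p i)) * W * Zmat x T (p i)
    = swap_halves_mat 1 * (transpose_mat (Xmat x T i) * W * Zmat x T i) * swap_halves_mat (T - 1)"
  unfolding XtW_partner[OF assms] unfolding Zmat_partner[OF assms]
  by (rule mult_conj_mat[OF XtW_carrier Zmat_carrier swap_halves_mat_1_carrier one_carrier_mat
        swap_halves_mat_carrier]) simp

end

lemma Smat_swap_invariant:
  assumes W: "minv (Sigma T n sa2 se2) \<in> carrier_mat T T"
  shows "swap_halves_mat 1 * Smat x T I n sa2 se2 * 1\<^sub>m T = Smat x T I n sa2 se2"
  unfolding Smat_def using W
  by (intro msum_partner_invariant) (auto simp: XtW_partner XtW_carrier)

lemma Mmat_swap_invariant:
  assumes W: "minv (Sigma T n sa2 se2) \<in> carrier_mat T T"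
  shows "swap_halves_mat 1 * Mmat x T I n sa2 se2 * swap_halves_mat 1 = Mmat x T I n sa2 se2"
proof -
  define P :: "real mat" where "P = swap_halves_mat 1"
  define A where "A = msum 2 2 (\<lambda>i. transpose_mat (Xmat x T i) * minv (Sigma T n sa2 se2) * Xmat x T i) I"
  define SX where "SX = Smat x T I n sa2 se2 * Xbar x T I"
  have P: "P \<in> carrier_mat 2 2" by (simp add: P_def)
  have "P * A * P = A"
    unfolding A_def P_def using W
    by (intro msum_partner_invariant) (auto simp: XtWX_partner XtWX_carrier)
  moreover have "P * SX * P = SX"
  proof -
    have "P * SX * P = (P * Smat x T I n sa2 se2 * 1\<^sub>m T) * (1\<^sub>m T * Xbar x T I * P)"
      unfolding SX_def
      by (rule mult_conj_mat[symmetric, OF Smat_carrier Xbar_carrier P one_carrier_mat P]) simp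
    also have "\<dots> = SX"
      unfolding SX_def P_def Smat_swap_invariant[OF W] Xbar_swap_invariant ..
    finally show ?thesis .
  qed
  moreover have "P * (A - SX) * P = P * A * P - P * SX * P"
    by (rule minus_conj_mat[symmetric, OF P _ _ P]) (auto simp: A_def SX_def intro: mult_carrier_mat[OF Smat_carrier Xbar_carrier])
  ultimately show ?thesis unfolding Mmat_def A_def[symmetric] SX_def[symmetric] P_def by simp
qed

lemma Rmat_swap_invariant:
  assumes W: "minv (Sigma T n sa2 se2) \<in> carrier_mat T T"
  shows "swap_halves_mat 1 * Rmat x T I n sa2 se2 * swap_halves_mat (T - 1) = Rmat x T I n sa2 se2"
proof -
  define P :: "real mat" where "P = swap_halves_mat 1"
  define Q :: "real mat" where "Q = swap_halves_mat (T - 1)"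
  define A where "A = msum 2 (2 * (T - 1)) (\<lambda>i. transpose_mat (Xmat x T i) * minv (Sigma T n sa2 se2) * Zmat x T i) I"
  define SZ where "SZ = Smat x T I n sa2 se2 * Zbar x T I"
  have P: "P \<in> carrier_mat 2 2" by (simp add: P_def)
  have Q: "Q \<in> carrier_mat (2 * (T - 1)) (2 * (T - 1))" by (simp add: Q_def)
  have "P * A * Q = A"
    unfolding A_def P_def Q_def using W
    by (intro msum_partner_invariant) (auto simp: XtWZ_partner XtWZ_carrier)
  moreover have "P * SZ * Q = SZ"
  proof -
    have "P * SZ * Q = (P * Smat x T I n sa2 se2 * 1\<^sub>m T) * (1\<^sub>m T * Zbar x T I * Q)"
      unfolding SZ_def
      by (rule mult_conj_mat[symmetric, OF Smat_carrier Zbar_carrier P one_carrier_mat Q]) simp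
    also have "\<dots> = SZ"
      unfolding SZ_def P_def Q_def Smat_swap_invariant[OF W] Zbar_swap_invariant ..
    finally show ?thesis .
  qed
  moreover have "P * (A - SZ) * Q = P * A * Q - P * SZ * Q"
    by (rule minus_conj_mat[symmetric, OF P _ _ Q]) (auto simp: A_def SZ_def intro: mult_carrier_mat[OF Smat_carrier Zbar_carrier])
  ultimately show ?thesis unfolding Rmat_def A_def[symmetric] SZ_def[symmetric] P_def Q_def by simp
qed

lemma Hmat_swap_invariant:
  assumes W: "minv (Sigma T n sa2 se2) \<in> carrier_mat T T"
    and inv: "invertible_mat (Mmat x T I n sa2 se2)"
  shows "swap_halves_mat 1 * Hmat x T I n sa2 se2 * swap_halves_mat (T - 1) = Hmat x T I n sa2 se2"
proof -
  define P :: "real mat" where "P = swap_halves_mat 1"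
  define Q :: "real mat" where "Q = swap_halves_mat (T - 1)"
  define M where "M = Mmat x T I n sa2 se2"
  define R where "R = Rmat x T I n sa2 se2"
  have P: "P \<in> carrier_mat 2 2" by (simp add: P_def)
  have Q: "Q \<in> carrier_mat (2 * (T - 1)) (2 * (T - 1))" by (simp add: Q_def)
  have PP: "P * P = 1\<^sub>m 2" unfolding P_def using swap_halves_mat_squared[of 1] by simp
  have M: "M \<in> carrier_mat 2 2" by (simp add: M_def)
  have R: "R \<in> carrier_mat 2 (2 * (T - 1))" by (simp add: R_def)
  have "P * minv M * P = minv (P * M * P)" by (rule minv_conj_mat[symmetric, OF M inv[folded M_def] P PP])
  also have "P * M * P = M" unfolding M_def P_def by (rule Mmat_swap_invariant[OF W])
  finally have Mi: "P * minv M * P = minv M" .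
  have "P * (minv M * R) * Q = (P * minv M * P) * (P * R * Q)"
    by (rule mult_conj_mat[symmetric, OF minv_mat(1)[OF inv[folded M_def] M] R P P Q PP])
  also have "\<dots> = minv M * R"
    unfolding Mi unfolding R_def P_def Q_def Rmat_swap_invariant[OF W] ..
  finally show ?thesis unfolding Hmat_def M_def[symmetric] R_def[symmetric] P_def[symmetric] Q_def[symmetric] .
qed

end

theorem proposition2:
  fixes x :: "nat \<Rightarrow> nat \<Rightarrow> nat \<Rightarrow> real"
    and T I n :: nat and sa2 se2 :: real
  assumes T2: "T \<ge> 2" and npos: "n > 0" and sa2: "sa2 \<ge> 0" and se2: "se2 > 0"
    and binary: "\<And>k i j. k < 2 \<Longrightarrow> i < I \<Longrightarrow> j < T \<Longrightarrow> x k i j \<in> {0, 1}"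
    and start: "\<And>k i. k < 2 \<Longrightarrow> i < I \<Longrightarrow> x k i 0 = 0"
    and mono: "\<And>k i j j'. k < 2 \<Longrightarrow> i < I \<Longrightarrow> j \<le> j' \<Longrightarrow> j' < T \<Longrightarrow> x k i j \<le> x k i j'"
    and pairs: "\<exists>p. (\<forall>i<I. p i < I \<and> p i \<noteq> i \<and> p (p i) = i \<and>
                     (\<forall>j<T. x 0 i j = x 1 (p i) j \<and> x 1 i j = x 0 (p i) j))"
    and inv: "invertible_mat (Mmat x T I n sa2 se2)"
  shows "\<exists>h1 h2. h1 \<in> carrier_vec (T - 1) \<and> h2 \<in> carrier_vec (T - 1) \<and>
           Hmat x T I n sa2 se2 =
             mat 2 (2 * (T - 1)) (\<lambda>(r, c).
               if r = 0 then (if c < T - 1 then h1 $ c else h2 $ (c - (T - 1)))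
               else (if c < T - 1 then h2 $ c else h1 $ (c - (T - 1)))) \<and>
           (\<forall>d1 \<in> carrier_vec (T - 1). \<forall>d2 \<in> carrier_vec (T - 1).
              Hmat x T I n sa2 se2 *\<^sub>v (d1 @\<^sub>v d2) =
                vec 2 (\<lambda>r. if r = 0 then h1 \<bullet> d1 + h2 \<bullet> d2 else h2 \<bullet> d1 + h1 \<bullet> d2))"
proof -
  obtain p where "mirror_pairing x T I p"
    using pairs unfolding mirror_pairing_def by blast
  then have invariant: "swap_halves_mat 1 * Hmat x T I n sa2 se2 * swap_halves_mat (T - 1)
      = Hmat x T I n sa2 se2"
    using minv_Sigma_carrier[OF npos sa2 se2] inv by (rule mirror_pairing.Hmat_swap_invariant)
  define H where "H = Hmat x T I n sa2 se2"
  define h1 where "h1 = vec (T - 1) (\<lambda>c. H $$ (0, c))"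
  define h2 where "h2 = vec (T - 1) (\<lambda>c. H $$ (0, c + (T - 1)))"
  have "H \<in> carrier_mat 2 (2 * (T - 1))" unfolding H_def by (rule Hmat_carrier[OF inv])
  then have block: "H = mirror_block_mat (T - 1) h1 h2"
    unfolding h1_def h2_def by (rule swap_invariant_mirror_block_mat) (use invariant H_def in simp)
  have h: "h1 \<in> carrier_vec (T - 1)" "h2 \<in> carrier_vec (T - 1)" by (simp_all add: h1_def h2_def)
  show ?thesis
  proof (intro exI conjI ballI)
    show "Hmat x T I n sa2 se2 = mat 2 (2 * (T - 1)) (\<lambda>(r, c).
        if r = 0 then (if c < T - 1 then h1 $ c else h2 $ (c - (T - 1)))
        else (if c < T - 1 then h2 $ c else h1 $ (c - (T - 1))))"
      using block unfolding H_def mirror_block_mat_def .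
    fix d1 d2 :: "real vec" assume "d1 \<in> carrier_vec (T - 1)" "d2 \<in> carrier_vec (T - 1)"
    then show "Hmat x T I n sa2 se2 *\<^sub>v (d1 @\<^sub>v d2) =
        vec 2 (\<lambda>r. if r = 0 then h1 \<bullet> d1 + h2 \<bullet> d2 else h2 \<bullet> d1 + h1 \<bullet> d2)"
      unfolding H_def[symmetric] block by (rule mirror_block_mat_mult_append[OF h])
  qed (use h in auto)
qed

end
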